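(* Let $G_1$ and $G_2$ be OPERA DAGs with $G_1\sim G_2$. Then $G_1$ and $G_2$ are root consistent: for every event $v$ contained in both DAGs and every $j\ge 1$, if $v$ is a root of frame $j$ in $G_1$, then $v$ is a root of frame $j$ in $G_2$.
   Context: An OPERA DAG is a finite directed acyclic graph whose vertices are events. Each event $v$ has a creator $cr(v)$ among a fixed finite set of nodes, the same for both DAGs. Each node $i$ has weight (validating power) $w_i>0$, and $W=\sum_i w_i$. An edge $(u,v)$ means that $u$ references $v$ as a parent. An event $u$ reaches an event $v$ if $v$ is $u$ or an ancestor of $u$. $G[v]$ is the subgraph induced on $v$ and all its ancestors, and $G_1\sim G_2$ means $G_1[v]=G_2[v]$ for every event $v$ in both DAGs. A leaf event is the first event created by a node (an event with no parent created by the same node). Roots and frames are defined recursively in a DAG $G$. The root set $R_1$ of frame 1 consists of all leaf events. For $k\ge 1$, the root set $R_{k+1}$ consists of all events $r$ with $r\notin R_1\cup\dots\cup R_k$ such that the creators of the roots in $R_k$ reached by $r$ have total weight greater than $2W/3$. An event in $R_j$ is a root of frame $j$. *)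

theory Defs
  imports Complex_Main
begin

text \<open>A DAG: a set of events and a parent-reference edge relation; (u,v) in edges
  means that u references v as a parent.  The creator function cr, the node set N
  and the weights w are global (shared by both DAGs).\<close>
record 'e dag =
  events :: "'e set"
  edges  :: "('e \<times> 'e) set"

definition opera_dag :: "'n set \<Rightarrow> ('e \<Rightarrow> 'n) \<Rightarrow> ('n \<Rightarrow> real) \<Rightarrow> 'e dag \<Rightarrow> bool" where
  "opera_dag N cr w G \<longleftrightarrow>
     finite N \<and> (\<forall>i\<in>N. w i > 0) \<and>
     finite (events G) \<and> edges G \<subseteq> events G \<times> events G \<and> acyclic (edges G) \<and>
     (\<forall>v\<in>events G. cr v \<in> N)"

definition reaches :: "'e dag \<Rightarrow> 'e \<Rightarrow> 'e \<Rightarrow> bool" where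
  "reaches G u v \<longleftrightarrow> u \<in> events G \<and> (u, v) \<in> (edges G)\<^sup>*"

definition subdag :: "'e dag \<Rightarrow> 'e \<Rightarrow> 'e dag" where
  "subdag G v = (let S = {x. reaches G v x} in
     \<lparr> events = S, edges = edges G \<inter> (S \<times> S) \<rparr>)"

definition dag_sim :: "'e dag \<Rightarrow> 'e dag \<Rightarrow> bool" where
  "dag_sim G1 G2 \<longleftrightarrow> (\<forall>v. v \<in> events G1 \<and> v \<in> events G2 \<longrightarrow> subdag G1 v = subdag G2 v)"

definition leaf_events :: "('e \<Rightarrow> 'n) \<Rightarrow> 'e dag \<Rightarrow> 'e set" where
  "leaf_events cr G = {v \<in> events G. \<not> (\<exists>p. (v, p) \<in> edges G \<and> cr p = cr v)}"

text \<open>roots_aux N cr w G k = (R_k, R_1 \<union> ... \<union> R_k); index 0 is a dummy.\<close>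
fun roots_aux :: "'n set \<Rightarrow> ('e \<Rightarrow> 'n) \<Rightarrow> ('n \<Rightarrow> real) \<Rightarrow> 'e dag \<Rightarrow> nat \<Rightarrow> 'e set \<times> 'e set" where
  "roots_aux N cr w G 0 = ({}, {})"
| "roots_aux N cr w G (Suc 0) = (leaf_events cr G, leaf_events cr G)"
| "roots_aux N cr w G (Suc (Suc k)) =
     (let (Rk, U) = roots_aux N cr w G (Suc k);
          R' = {r \<in> events G. r \<notin> U \<and>
                  sum w (cr ` {x \<in> Rk. reaches G r x}) > 2 * sum w N / 3}
      in (R', U \<union> R'))"

definition root_set :: "'n set \<Rightarrow> ('e \<Rightarrow> 'n) \<Rightarrow> ('n \<Rightarrow> real) \<Rightarrow> 'e dag \<Rightarrow> nat \<Rightarrow> 'e set" where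
  "root_set N cr w G j = fst (roots_aux N cr w G j)"

end

theory Submission
  imports Defs
begin

text \<open>Whether an event is a root of frame j is decided inside its own history:
  leaf status depends only on the event's outgoing edges, and the test for frame
  k+1 only inspects roots of frame k reached by the event, which are ancestors of it.
  Since G1 and G2 share the history of every common event, an induction on the frame
  index shows that the root sets R_j, together with their unions R_1 \<union> ... \<union> R_j
  (needed for the disjointness clause), agree on the common events.\<close>

lemma events_subdag: "events (subdag G v) = {x. reaches G v x}"
  unfolding subdag_def Let_def by simp

lemma edge_in_subdag_iff:
  assumes "v \<in> events G"
  shows "(v, p) \<in> edges (subdag G v) \<longleftrightarrow> (v, p) \<in> edges G"
  using assms unfolding subdag_def Let_def reaches_def by auto

lemma reaches_in_events:
  assumes "edges G \<subseteq> events G \<times> events G" and "reaches G u v"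
  shows "v \<in> events G"
proof -
  have "(u, v) \<in> (edges G)\<^sup>*" and "u \<in> events G"
    using assms(2) unfolding reaches_def by auto
  then show ?thesis
    using assms(1) by (cases rule: rtranclE) auto
qed

lemma dag_sim_reaches_iff:
  assumes "dag_sim G1 G2" and "v \<in> events G1" and "v \<in> events G2"
  shows "reaches G1 v x \<longleftrightarrow> reaches G2 v x"
proof -
  have "subdag G1 v = subdag G2 v"
    using assms unfolding dag_sim_def by blast
  then show ?thesis
    using events_subdag by (metis mem_Collect_eq)
qed

lemma dag_sim_edge_iff:
  assumes "dag_sim G1 G2" and "v \<in> events G1" and "v \<in> events G2"
  shows "(v, p) \<in> edges G1 \<longleftrightarrow> (v, p) \<in> edges G2"
proof -
  have "subdag G1 v = subdag G2 v"
    using assms unfolding dag_sim_def by blast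
  then show ?thesis
    using edge_in_subdag_iff assms(2,3) by metis
qed

lemma dag_sim_leaf_events:
  assumes "dag_sim G1 G2" and "v \<in> events G1" and "v \<in> events G2"
  shows "v \<in> leaf_events cr G1 \<longleftrightarrow> v \<in> leaf_events cr G2"
  using dag_sim_edge_iff[OF assms] assms(2,3) unfolding leaf_events_def by blast

lemma dag_sim_reached_eq:
  assumes "edges G1 \<subseteq> events G1 \<times> events G1" and "edges G2 \<subseteq> events G2 \<times> events G2"
    and "dag_sim G1 G2" and "v \<in> events G1" and "v \<in> events G2"
    and R: "R1 \<inter> (events G1 \<inter> events G2) = R2 \<inter> (events G1 \<inter> events G2)"
  shows "{x \<in> R1. reaches G1 v x} = {x \<in> R2. reaches G2 v x}"
proof -
  have "x \<in> events G1 \<inter> events G2" if "reaches G1 v x" for x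
    using that reaches_in_events[OF assms(1)] reaches_in_events[OF assms(2)]
      dag_sim_reaches_iff[OF assms(3-5)] by blast
  then show ?thesis
    using R dag_sim_reaches_iff[OF assms(3-5)] by blast
qed

lemma roots_aux_dag_sim:
  assumes "edges G1 \<subseteq> events G1 \<times> events G1" and "edges G2 \<subseteq> events G2 \<times> events G2"
    and "dag_sim G1 G2"
  defines "C \<equiv> events G1 \<inter> events G2"
  shows "fst (roots_aux N cr w G1 n) \<inter> C = fst (roots_aux N cr w G2 n) \<inter> C
       \<and> snd (roots_aux N cr w G1 n) \<inter> C = snd (roots_aux N cr w G2 n) \<inter> C"
proof (induction n)
  case 0
  show ?case by simp
next
  case (Suc n)
  note IH = Suc.IH
  show ?case
  proof (cases n)
    case 0
    show ?thesis
      using dag_sim_leaf_events[OF assms(3)] \<open>n = 0\<close> unfolding C_def by auto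
  next
    case (Suc k)
    obtain R1 U1 where r1: "roots_aux N cr w G1 (Suc k) = (R1, U1)" by fastforce
    obtain R2 U2 where r2: "roots_aux N cr w G2 (Suc k) = (R2, U2)" by fastforce
    have R: "R1 \<inter> C = R2 \<inter> C" and U: "U1 \<inter> C = U2 \<inter> C"
      using IH r1 r2 \<open>n = Suc k\<close> by auto
    have "{x \<in> R1. reaches G1 r x} = {x \<in> R2. reaches G2 r x}" if "r \<in> C" for r
      using dag_sim_reached_eq[OF assms(1-3)] R that unfolding C_def by blast
    then show ?thesis
      using r1 r2 R U \<open>n = Suc k\<close> by (auto simp: C_def)
  qed
qed

theorem mainTheorem3:
  fixes N :: "'n set" and cr :: "'e \<Rightarrow> 'n" and w :: "'n \<Rightarrow> real"
    and G1 G2 :: "'e dag"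
  assumes "opera_dag N cr w G1" and "opera_dag N cr w G2"
    and "dag_sim G1 G2"
  shows "\<forall>v j. v \<in> events G1 \<and> v \<in> events G2 \<and> j \<ge> 1 \<and> v \<in> root_set N cr w G1 j
            \<longrightarrow> v \<in> root_set N cr w G2 j"
  using roots_aux_dag_sim[OF _ _ assms(3)] assms(1,2)
  unfolding root_set_def opera_dag_def by blast

end
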